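(* Let $d\ge 3$ be odd, $n=\frac{d^2+1}{2}$, and consider the generalized bicycle code defined by $a(x)=1+x$, $b(x)=1+x^d$ in $R_n$ (a $[[d^2+1,2,d]]$ code). Let $$u(x)=1+x^d+x^{2d}+\cdots+x^{(\frac{d-1}{2}-1)d},\qquad v(x)=x^{n-\frac{d+1}{2}}+x^{n-\frac{d+1}{2}+1}+\cdots+x^{n-1},$$ $P_d(x)=1+x+\cdots+x^{d-1}$, and $P_d(x)^{-1}$ its inverse modulo $x^n-1$. Then $w_1=(u(x),v(x))$ and $w_2=(xv(x^d),u(x^d))$ lie in $C_1\setminus C_2$ and $w_1+w_2\notin C_2$, so the two logical qubits may be labelled so that the X-type operator $X^{w_1}$ implements logical $XI$ and $X^{w_2}$ implements logical $XX$; with this labelling, logical $IX$ is implemented by $X^{(1,P_d(x))}$ and by $X^{(P_d(x)^{-1},1)}$. Each of these statements remains true when the vector is replaced by any cyclic shift $x^i\cdot(\,\cdot\,,\,\cdot\,)$. The operators for $XI$ and $XX$ have weight $d$ and those for $IX$ have weight $d+1$, and each is of minimum weight among X-type operators implementing the same logical operator.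
   Context: $R_n=\mathbb{F}_2[x]/\langle x^n-1\rangle$; vectors of $\mathbb{F}_2^{2n}$ are pairs $(p(x),q(x))$ of elements of $R_n$ (first component on the first $n$ qubits, second on the last $n$), $x^i\cdot(p,q)=(x^ip,x^iq)$, and weight is the number of nonzero coefficients. For the generalized bicycle code defined by $a,b$: X-stabilizer space $C_2=\{(ca,cb):c\in R_n\}$ and $C_1=\{(p,q):pb+qa=0\}$ (X-type operators commuting with all Z-stabilizers $x^i(b(x^{-1}),a(x^{-1}))$). $X^{w}$ denotes the tensor product of Pauli $X$ on the support of $w$. X-type operators $X^w$, $X^{w'}$ with $w,w'\in C_1$ implement the same logical operator iff $w+w'\in C_2$, and $X^w$ is a non-trivial logical operator iff $w\in C_1\setminus C_2$. *)

theory Defs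
  imports "HOL-Library.Z2" "HOL-Computational_Algebra.Polynomial"
begin

text \<open>Elements of R_n = F_2[x]/(x^n - 1) are represented by their canonical
 representatives: polynomials over F_2 (type bit) of degree < n.
 Vectors of F_2^{2n} are pairs of such representatives.\<close>

definition xn1 :: "nat \<Rightarrow> bit poly" where
  "xn1 n = monom 1 n - 1"

definition rmod :: "nat \<Rightarrow> bit poly \<Rightarrow> bit poly" where
  "rmod n p = p mod xn1 n"

definition Rn :: "nat \<Rightarrow> bit poly set" where
  "Rn n = {p. rmod n p = p}"

definition rinv :: "nat \<Rightarrow> bit poly \<Rightarrow> bit poly" where
  "rinv n p = (SOME q. q \<in> Rn n \<and> rmod n (q * p) = 1)"

definition vadd :: "bit poly \<times> bit poly \<Rightarrow> bit poly \<times> bit poly \<Rightarrow> bit poly \<times> bit poly" where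
  "vadd w w' = (fst w + fst w', snd w + snd w')"

definition shift :: "nat \<Rightarrow> nat \<Rightarrow> bit poly \<times> bit poly \<Rightarrow> bit poly \<times> bit poly" where
  "shift n i w = (rmod n (monom 1 i * fst w), rmod n (monom 1 i * snd w))"

definition pwt :: "bit poly \<Rightarrow> nat" where
  "pwt p = card {i. coeff p i \<noteq> 0}"

definition wt :: "bit poly \<times> bit poly \<Rightarrow> nat" where
  "wt w = pwt (fst w) + pwt (snd w)"

text \<open>X-stabilizer space C_2 and the space C_1 of X-operators commuting with the Z-stabilizers\<close>
definition C2 :: "nat \<Rightarrow> bit poly \<Rightarrow> bit poly \<Rightarrow> (bit poly \<times> bit poly) set" where
  "C2 n a b = {(rmod n (c * a), rmod n (c * b)) | c. c \<in> Rn n}"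

definition C1 :: "nat \<Rightarrow> bit poly \<Rightarrow> bit poly \<Rightarrow> (bit poly \<times> bit poly) set" where
  "C1 n a b = {(p, q). p \<in> Rn n \<and> q \<in> Rn n \<and> rmod n (p * b + q * a) = 0}"

definition same_logical :: "nat \<Rightarrow> bit poly \<Rightarrow> bit poly \<Rightarrow> bit poly \<times> bit poly \<Rightarrow> bit poly \<times> bit poly \<Rightarrow> bool" where
  "same_logical n a b w w' \<longleftrightarrow> w \<in> C1 n a b \<and> w' \<in> C1 n a b \<and> vadd w w' \<in> C2 n a b"

definition min_weight :: "nat \<Rightarrow> bit poly \<Rightarrow> bit poly \<Rightarrow> bit poly \<times> bit poly \<Rightarrow> bool" where
  "min_weight n a b w \<longleftrightarrow> (\<forall>w'. same_logical n a b w w' \<longrightarrow> wt w \<le> wt w')"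

definition subst_pow :: "bit poly \<Rightarrow> nat \<Rightarrow> bit poly" where
  "subst_pow p k = pcompose p (monom 1 k)"

definition u_poly :: "nat \<Rightarrow> bit poly" where
  "u_poly d = (\<Sum>j<(d - 1) div 2. monom 1 (j * d))"

definition v_poly :: "nat \<Rightarrow> nat \<Rightarrow> bit poly" where
  "v_poly n d = (\<Sum>k\<in>{n - (d + 1) div 2..<n}. monom 1 k)"

definition P_poly :: "nat \<Rightarrow> bit poly" where
  "P_poly d = (\<Sum>k<d. monom 1 k)"

end

theory Submission
  imports Defs "HOL-Number_Theory.Cong"
begin

(* Let J = 1 + x + ... + x^(n-1), so that x^n - 1 = (1 + x) J. Since b = (1 + x) P_d and n, d are
   odd, every (p, q) in C1 satisfies q = p P_d + lambda J modulo x^n - 1 with lambda = p(1) + q(1).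
   Hence (p, q) lies in C2 iff p(1) = q(1) = 0: the logical operator of (p, q) is determined by its
   parities (p(1), q(1)), which cyclic shifts preserve.
   For the weight bound take R, S with R + P_d S = J modulo x^n - 1. Then p R + q S is congruent to
   (p(1) + S(1) lambda) J, so whenever this scalar is 1 the n monomials of J come from at most
   |p||R| + |q||S| products of monomials. For d = 2h + 1 and n = 2h^2 + 2h + 1 there are two such
   pairs (R, S), of weights (h + 1, h) and (h, h + 1) and with S(1) of either parity; they force
   |p| + |q| >= d for every non-trivial class, and >= d + 1 for the class with parities (1, 1),
   whose weights are even. The explicit operators attain these bounds. *)

(* Keep bit arithmetic in ring form rather than as xor/and, and coefficient supports in the
   form {i. coeff p i \<noteq> 0} used by pwt. *)
declare bit_not_zero_iff [simp del] add_bit_eq_xor [simp del] mult_bit_eq_and [simp del]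

lemma bit_add_self [simp]: "(x :: bit) + x = 0"
  by (cases x) simp_all

lemma bit_poly_add_self [simp]: "(p :: bit poly) + p = 0"
  by (rule poly_eqI) (simp only: coeff_add coeff_0 bit_add_self)

lemma bit_poly_two [simp]: "(2 :: bit poly) = 0"
  by (metis one_add_one bit_poly_add_self)

lemma bit_poly_add_cancel_left [simp]: "(p :: bit poly) + (p + q) = q"
  by (simp add: add.assoc [symmetric])

lemma bit_add_eq_0_iff [simp]: "(x :: bit) + y = 0 \<longleftrightarrow> x = y"
  by (cases x; cases y) simp_all

lemma bit_uminus [simp]: "- (x :: bit) = x"
  by (cases x) simp_all

lemma bit_poly_uminus [simp]: "- (p :: bit poly) = p"
  by (simp add: poly_eq_iff)

lemma bit_poly_diff: "(p :: bit poly) - q = p + q"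
  by (simp add: diff_conv_add_uminus)

lemma of_nat_bit: "(of_nat m :: bit) = of_bool (odd m)"
  by (induction m) auto

subsection \<open>All-ones polynomials and the substitution x := x^k\<close>

lemma P_poly_add: "P_poly (k + l) = P_poly k + monom 1 k * P_poly l"
  by (induction l) (simp_all add: P_poly_def distrib_left mult_monom add.assoc)

lemma one_plus_X_mult_P_poly: "(1 + monom 1 1) * P_poly k = 1 + monom 1 k"
  by (induction k) (simp_all add: P_poly_def distrib_left distrib_right mult_monom add.assoc)

lemma xn1_eq: "xn1 n = (1 + monom 1 1) * P_poly n"
  unfolding xn1_def bit_poly_diff one_plus_X_mult_P_poly by (rule add.commute)

lemma coeff_P_poly: "coeff (P_poly k) i = of_bool (i < k)"
  by (simp add: P_poly_def coeff_sum coeff_monom)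

lemma poly_P_poly_one: "poly (P_poly k) 1 = of_nat k"
  by (simp add: P_poly_def poly_sum poly_monom bit_not_zero_iff)

lemma degree_P_poly_less:
  assumes "k > 0"
  shows "degree (P_poly k) < k"
proof -
  have "degree (P_poly k) \<le> k - 1"
    by (rule degree_le) (auto simp: coeff_P_poly)
  with assms show ?thesis by linarith
qed

lemma sum_monom_interval: "(\<Sum>k\<in>{m..<m + l}. monom (1 :: bit) k) = monom 1 m * P_poly l"
  by (induction l) (simp_all add: P_poly_def distrib_left mult_monom add.commute)

lemma one_plus_X_dvd_iff: "1 + monom 1 1 dvd (p :: bit poly) \<longleftrightarrow> poly p 1 = 0"
  using poly_eq_0_iff_dvd [of p 1] by (simp add: monom_Suc one_pCons)

lemma subst_pow_monom: "subst_pow (monom 1 k) m = monom 1 (k * m)"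
  by (induction k) (simp_all add: subst_pow_def monom_Suc pcompose_pCons pcompose_1 mult_monom)

lemma subst_pow_add: "subst_pow (p + q) k = subst_pow p k + subst_pow q k"
  by (simp add: subst_pow_def pcompose_add)

lemma subst_pow_mult: "subst_pow (p * q) k = subst_pow p k * subst_pow q k"
  by (simp add: subst_pow_def pcompose_mult)

lemma subst_pow_sum: "subst_pow (sum f A) k = (\<Sum>i\<in>A. subst_pow (f i) k)"
  by (simp add: subst_pow_def pcompose_sum)

lemma subst_pow_0: "subst_pow 0 k = 0"
  by (simp add: subst_pow_def)

lemma subst_pow_one: "subst_pow 1 k = 1"
  by (simp add: subst_pow_def pcompose_1)

lemma poly_subst_pow_one: "poly (subst_pow p k) 1 = poly p 1"
  by (simp add: subst_pow_def poly_pcompose poly_monom)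

lemma P_poly_mult_subst_pow_P_poly: "P_poly d * subst_pow (P_poly m) d = P_poly (m * d)"
proof (induction m)
  case (Suc m)
  have "subst_pow (P_poly (Suc m)) d = subst_pow (P_poly m) d + monom 1 (m * d)"
    by (simp add: P_poly_def subst_pow_add subst_pow_monom)
  then show ?case
    using P_poly_add [of "m * d" d] Suc.IH by (simp add: distrib_left add.commute mult.commute)
qed (simp add: P_poly_def subst_pow_def)

lemma subst_pow_P_poly_mult_one_plus_monom:
  "subst_pow (P_poly m) d * (1 + monom 1 d) = 1 + monom 1 (m * d)"
proof -
  have "subst_pow ((1 + monom 1 1) * P_poly m) d = subst_pow (1 + monom 1 m) d"
    by (simp only: one_plus_X_mult_P_poly)
  then show ?thesis
    by (simp add: subst_pow_mult subst_pow_add subst_pow_one subst_pow_monom mult.commute)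
qed

subsection \<open>Hamming weight\<close>

lemma finite_coeff_nonzero: "finite {i. coeff p i \<noteq> 0}"
  by (rule finite_subset [of _ "{..degree p}"]) (auto intro: le_degree)

lemma bit_poly_eq_sum_monom: "(p :: bit poly) = (\<Sum>k | coeff p k \<noteq> 0. monom 1 k)"
proof (rule poly_eqI)
  fix i
  have "coeff p i = 0 \<or> coeff p i = 1" by (cases "coeff p i") simp_all
  then show "coeff p i = coeff (\<Sum>k | coeff p k \<noteq> 0. monom 1 k) i"
    by (auto simp: coeff_sum coeff_monom finite_coeff_nonzero)
qed

lemma pwt_add_le: "pwt (p + q) \<le> pwt p + pwt q"
proof -
  have "pwt (p + q) \<le> card ({i. coeff p i \<noteq> 0} \<union> {i. coeff q i \<noteq> 0})"
    unfolding pwt_def by (rule card_mono) (auto simp: finite_coeff_nonzero)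
  also have "\<dots> \<le> pwt p + pwt q"
    unfolding pwt_def by (rule card_Un_le)
  finally show ?thesis .
qed

lemma pwt_sum_le: "pwt (sum f I) \<le> (\<Sum>i\<in>I. pwt (f i))"
proof (induction I rule: infinite_finite_induct)
  case (insert x F)
  then show ?case using pwt_add_le [of "f x" "sum f F"] by simp
qed (simp_all add: pwt_def)

lemma pwt_monom [simp]: "pwt (monom 1 k) = 1"
proof -
  have "{i. coeff (monom (1 :: bit) k) i \<noteq> 0} = {k}" by (auto simp: coeff_monom)
  then show ?thesis by (simp add: pwt_def)
qed

lemma pwt_one [simp]: "pwt 1 = 1"
  using pwt_monom [of 0] by (simp add: one_pCons monom_0)

lemma pwt_sum_monom_le: "pwt (\<Sum>i\<in>I. monom 1 (f i)) \<le> card I"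
  using pwt_sum_le [of "\<lambda>i. monom 1 (f i)" I] by simp

lemma pwt_P_poly [simp]: "pwt (P_poly k) = k"
proof -
  have "{i. coeff (P_poly k) i \<noteq> 0} = {..<k}" by (auto simp: coeff_P_poly)
  then show ?thesis by (simp add: pwt_def)
qed

lemma poly_one_eq_pwt: "poly p 1 = of_nat (pwt p)"
  by (subst bit_poly_eq_sum_monom) (simp add: poly_sum poly_monom pwt_def bit_not_zero_iff)

lemma bit_poly_mult_eq_sum_monom:
  "(p :: bit poly) * q
    = (\<Sum>(k, l) \<in> {k. coeff p k \<noteq> 0} \<times> {l. coeff q l \<noteq> 0}. monom 1 (k + l))"
  by (subst (1 2) bit_poly_eq_sum_monom)
    (simp add: sum_product sum.cartesian_product mult_monom finite_coeff_nonzero)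

lemma pwt_mult_le: "pwt (p * q) \<le> pwt p * pwt q"
proof -
  have "pwt (p * q) \<le> card ({k. coeff p k \<noteq> 0} \<times> {l. coeff q l \<noteq> 0})"
    unfolding bit_poly_mult_eq_sum_monom split_def by (rule pwt_sum_monom_le)
  then show ?thesis by (simp add: card_cartesian_product pwt_def)
qed

lemma pwt_subst_pow_le: "pwt (subst_pow p m) \<le> pwt p"
proof -
  have "subst_pow p m = (\<Sum>k | coeff p k \<noteq> 0. monom 1 (k * m))"
    by (subst bit_poly_eq_sum_monom) (simp add: subst_pow_sum subst_pow_monom)
  then show ?thesis using pwt_sum_monom_le by (simp add: pwt_def)
qed

subsection \<open>Reduction modulo x^n - 1\<close>

lemma monom_cong_one: "[monom 1 (n * k) = 1] (mod xn1 n)"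
proof -
  have "[monom 1 n = 1] (mod xn1 n)"
    by (simp add: cong_iff_dvd_diff xn1_def)
  then have "[monom 1 n ^ k = 1 ^ k] (mod xn1 n)"
    by (rule cong_pow)
  then show ?thesis by (simp add: monom_power)
qed

lemma monom_cong_mod: "[monom 1 k = monom 1 (k mod n)] (mod xn1 n)"
proof -
  have "[monom 1 (k mod n) * monom 1 (n * (k div n)) = monom 1 (k mod n) * 1] (mod xn1 n)"
    by (intro cong_mult cong_refl monom_cong_one)
  then show ?thesis by (simp add: mult_monom cong_sym_eq)
qed

lemma degree_xn1: "n > 0 \<Longrightarrow> degree (xn1 n) = n"
  by (simp add: xn1_def bit_poly_diff degree_add_eq_left degree_monom_eq)

lemma xn1_nonzero: "n > 0 \<Longrightarrow> xn1 n \<noteq> 0"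
  using degree_xn1 [of n] by auto

lemma Rn_iff_degree:
  assumes "n > 0"
  shows "p \<in> Rn n \<longleftrightarrow> p = 0 \<or> degree p < n"
proof
  assume "p \<in> Rn n"
  then have "p mod xn1 n = p" by (simp add: Rn_def rmod_def)
  then show "p = 0 \<or> degree p < n"
    using degree_mod_less [OF xn1_nonzero [OF assms], of p] degree_xn1 [OF assms] by auto
next
  assume "p = 0 \<or> degree p < n"
  then show "p \<in> Rn n"
    using mod_poly_less [of p "xn1 n"] degree_xn1 [OF assms] by (auto simp: Rn_def rmod_def)
qed

lemma rmod_in_Rn: "rmod n p \<in> Rn n"
  by (simp add: Rn_def rmod_def)

lemma rmod_eq_iff_cong: "rmod n p = rmod n q \<longleftrightarrow> [p = q] (mod xn1 n)"
  by (simp add: rmod_def cong_def)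

lemma rmod_cong: "[rmod n p = p] (mod xn1 n)"
  by (simp add: rmod_def)

lemma Rn_cong_imp_eq: "p \<in> Rn n \<Longrightarrow> q \<in> Rn n \<Longrightarrow> [p = q] (mod xn1 n) \<Longrightarrow> p = q"
  by (simp add: Rn_def rmod_eq_iff_cong [symmetric])

lemma rmod_add: "rmod n (p + q) = rmod n p + rmod n q"
  by (simp add: rmod_def poly_mod_add_left)

lemma Rn_add: "p \<in> Rn n \<Longrightarrow> q \<in> Rn n \<Longrightarrow> p + q \<in> Rn n"
  by (simp add: Rn_def rmod_add)

lemma rmod_one: "n > 0 \<Longrightarrow> rmod n 1 = 1"
  by (simp add: rmod_def mod_poly_less degree_xn1)

lemma smult_P_poly_in_Rn: "n > 0 \<Longrightarrow> smult c (P_poly n) \<in> Rn n"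
  using degree_P_poly_less [of n] degree_smult_le [of c "P_poly n"] by (simp add: Rn_iff_degree)

lemma poly_one_cong:
  assumes "[p = q] (mod xn1 n)"
  shows "poly p 1 = poly q 1"
proof -
  obtain t where "p - q = xn1 n * t"
    using assms by (auto simp: cong_iff_dvd_diff elim: dvdE)
  then have "poly p 1 - poly q 1 = poly (xn1 n) 1 * poly t 1"
    by (metis poly_diff poly_mult)
  then show ?thesis by (simp add: xn1_def poly_monom)
qed

lemma poly_rmod_one: "poly (rmod n p) 1 = poly p 1"
  by (rule poly_one_cong) (rule rmod_cong)

lemma subst_pow_xn1: "subst_pow (xn1 n) k = xn1 (n * k)"
  by (simp add: xn1_def bit_poly_diff subst_pow_add subst_pow_one subst_pow_monom)

lemma xn1_dvd_xn1_mult: "xn1 n dvd xn1 (n * k)"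
  using monom_cong_one [of n k] by (simp add: cong_iff_dvd_diff xn1_def)

lemma subst_pow_cong:
  assumes "[p = q] (mod xn1 n)"
  shows "[subst_pow p k = subst_pow q k] (mod xn1 n)"
proof -
  obtain t where "p - q = xn1 n * t"
    using assms by (auto simp: cong_iff_dvd_diff elim!: dvdE)
  then have "subst_pow p k - subst_pow q k = xn1 (n * k) * subst_pow t k"
    by (metis subst_pow_def subst_pow_xn1 pcompose_diff pcompose_mult)
  then have "xn1 (n * k) dvd subst_pow p k - subst_pow q k" by simp
  then show ?thesis
    using xn1_dvd_xn1_mult dvd_trans by (metis cong_iff_dvd_diff)
qed

lemma pwt_rmod_le:
  assumes "n > 0"
  shows "pwt (rmod n p) \<le> pwt p"
proof -
  have "[p = (\<Sum>k | coeff p k \<noteq> 0. monom 1 (k mod n))] (mod xn1 n)"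
    by (subst bit_poly_eq_sum_monom, rule cong_sum) (rule monom_cong_mod)
  moreover have "k mod n \<le> n - 1" for k
    using mod_less_divisor [OF assms, of k] by linarith
  then have "degree (\<Sum>k | coeff p k \<noteq> 0. monom (1 :: bit) (k mod n)) \<le> n - 1"
    by (intro degree_sum_le) (auto simp: finite_coeff_nonzero degree_monom_eq)
  then have "(\<Sum>k | coeff p k \<noteq> 0. monom 1 (k mod n)) \<in> Rn n"
    using assms by (subst Rn_iff_degree) auto
  ultimately have "rmod n p = (\<Sum>k | coeff p k \<noteq> 0. monom 1 (k mod n))"
    using rmod_in_Rn Rn_cong_imp_eq cong_trans rmod_cong by metis
  then show ?thesis using pwt_sum_monom_le by (simp add: pwt_def)
qed

lemma rinv_eqI:
  assumes "n > 0" and "q \<in> Rn n" and "[q * p = 1] (mod xn1 n)"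
  shows "rinv n p = q"
proof -
  have "\<exists>q. q \<in> Rn n \<and> rmod n (q * p) = 1"
    using assms by (metis rmod_eq_iff_cong rmod_one)
  then have inv: "rinv n p \<in> Rn n" "[rinv n p * p = 1] (mod xn1 n)"
    unfolding rinv_def
    by (metis (mono_tags, lifting) someI_ex rmod_eq_iff_cong rmod_one [OF assms(1)])+
  have "[rinv n p = rinv n p * (q * p)] (mod xn1 n)"
    using cong_mult [OF cong_refl assms(3), of "rinv n p"] by (simp add: cong_sym)
  also have "rinv n p * (q * p) = q * (rinv n p * p)"
    by (simp add: mult_ac)
  also have "[\<dots> = q * 1] (mod xn1 n)"
    by (intro cong_mult cong_refl inv(2))
  finally show ?thesis
    using inv(1) assms(2) by (simp add: Rn_cong_imp_eq)
qed

lemma sum_monom_in_Rn: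
  assumes "n > 0" and "finite I" and "\<And>i. i \<in> I \<Longrightarrow> f i < n"
  shows "(\<Sum>i\<in>I. monom 1 (f i)) \<in> Rn n"
proof -
  have "degree (\<Sum>i\<in>I. monom (1 :: bit) (f i)) \<le> n - 1"
    using assms by (intro degree_sum_le) (auto simp: degree_monom_eq less_Suc_eq_le [symmetric])
  then show ?thesis
    using assms(1) by (subst Rn_iff_degree) auto
qed

lemma pwt_rmod_mult_le: "n > 0 \<Longrightarrow> pwt (rmod n (p * q)) \<le> pwt p * pwt q"
  using pwt_rmod_le pwt_mult_le order_trans by blast

lemma mult_P_poly_cong_smult: "[f * P_poly n = smult (poly f 1) (P_poly n)] (mod xn1 n)"
proof -
  have "1 + monom 1 1 dvd f + [:poly f 1:]"
    unfolding one_plus_X_dvd_iff by simp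
  then obtain g where "f + [:poly f 1:] = (1 + monom 1 1) * g" by (rule dvdE)
  then have "(f + [:poly f 1:]) * P_poly n = xn1 n * g"
    by (simp only: xn1_eq mult_ac)
  then show ?thesis by (simp add: cong_iff_dvd_diff bit_poly_diff distrib_right)
qed

subsection \<open>Logical classes\<close>

definition parities :: "bit poly \<times> bit poly \<Rightarrow> bit \<times> bit" where
  "parities w = (poly (fst w) 1, poly (snd w) 1)"

(* If n divides d^2 + 1, the substitution x := x^d maps a = 1 + x to b and b to x^(-1) a modulo
   x^n - 1, so twist is a symmetry of C1. *)
definition twist :: "nat \<Rightarrow> nat \<Rightarrow> bit poly \<times> bit poly \<Rightarrow> bit poly \<times> bit poly" where
  "twist n d w = (rmod n (monom 1 1 * subst_pow (snd w) d), rmod n (subst_pow (fst w) d))"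

lemma of_nat_wt: "of_nat (wt w) = fst (parities w) + snd (parities w)"
  by (simp add: wt_def parities_def poly_one_eq_pwt)

lemma parities_vadd:
  "parities (vadd w w') = (fst (parities w) + fst (parities w'), snd (parities w) + snd (parities w'))"
  by (simp add: parities_def vadd_def)

lemma parities_shift: "parities (shift n i w) = parities w"
  by (simp add: parities_def shift_def poly_rmod_one poly_monom)

lemma parities_twist: "parities (twist n d w) = (snd (parities w), fst (parities w))"
  by (simp add: parities_def twist_def poly_rmod_one poly_subst_pow_one poly_monom)

lemma wt_shift_le: "n > 0 \<Longrightarrow> wt (shift n i w) \<le> wt w"
  using pwt_rmod_mult_le [of n "monom 1 i"] by (simp add: wt_def shift_def add_mono)

lemma wt_twist_le:
  assumes "n > 0"
  shows "wt (twist n d w) \<le> wt w"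
proof -
  have "pwt (rmod n (monom 1 1 * subst_pow (snd w) d)) \<le> pwt (snd w)"
    using pwt_rmod_mult_le [OF assms, of "monom 1 1"] pwt_subst_pow_le order_trans by fastforce
  moreover have "pwt (rmod n (subst_pow (fst w) d)) \<le> pwt (fst w)"
    using pwt_rmod_le [OF assms] pwt_subst_pow_le order_trans by blast
  ultimately show ?thesis by (simp add: wt_def twist_def)
qed

lemma C1_iff_cong:
  "w \<in> C1 n a b
    \<longleftrightarrow> fst w \<in> Rn n \<and> snd w \<in> Rn n \<and> [fst w * b + snd w * a = 0] (mod xn1 n)"
  by (cases w) (simp add: C1_def rmod_def cong_def)

lemma rmod_pair_in_C1:
  assumes "[p * b + q * a = 0] (mod xn1 n)"
  shows "(rmod n p, rmod n q) \<in> C1 n a b"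
proof -
  have "[rmod n p * b + rmod n q * a = p * b + q * a] (mod xn1 n)"
    by (intro cong_add cong_mult cong_refl rmod_cong)
  with assms show ?thesis
    by (simp add: C1_iff_cong rmod_in_Rn cong_trans)
qed

lemma vadd_in_C1:
  assumes "w \<in> C1 n a b" and "w' \<in> C1 n a b"
  shows "vadd w w' \<in> C1 n a b"
proof -
  have "[(fst w * b + snd w * a) + (fst w' * b + snd w' * a) = 0 + 0] (mod xn1 n)"
    using assms by (intro cong_add) (auto simp: C1_iff_cong)
  then show ?thesis
    using assms by (auto simp: C1_iff_cong vadd_def Rn_add algebra_simps)
qed

lemma shift_in_C1:
  assumes "w \<in> C1 n a b"
  shows "shift n i w \<in> C1 n a b"
proof -
  have "[monom 1 i * (fst w * b + snd w * a) = monom 1 i * 0] (mod xn1 n)"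
    using assms by (intro cong_mult cong_refl) (auto simp: C1_iff_cong)
  then show ?thesis
    unfolding shift_def by (intro rmod_pair_in_C1) (simp add: algebra_simps)
qed

locale gb_code =
  fixes n d :: nat and a b :: "bit poly"
  assumes odd_n: "odd n" and odd_d: "odd d"
    and a_eq: "a = 1 + monom 1 1" and b_eq: "b = 1 + monom 1 d"
begin

lemma n_pos: "n > 0"
  using odd_n by (rule odd_pos)

lemma b_eq_a_mult_P_poly: "b = a * P_poly d"
  by (simp only: a_eq b_eq one_plus_X_mult_P_poly)

lemma xn1_eq_a_mult: "xn1 n = a * P_poly n"
  by (simp add: a_eq xn1_eq)

lemma a_nonzero: "a \<noteq> 0"
  by (simp add: a_eq monom_Suc one_pCons)

lemma C1_snd_cong:
  assumes "(p, q) \<in> C1 n a b"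
  shows "[q = p * P_poly d + smult (poly p 1 + poly q 1) (P_poly n)] (mod xn1 n)"
proof -
  have "a * P_poly n dvd a * (p * P_poly d + q)"
    using assms by (simp add: C1_iff_cong cong_0_iff xn1_eq_a_mult b_eq_a_mult_P_poly algebra_simps)
  then obtain t where t: "p * P_poly d + q = P_poly n * t"
    using a_nonzero by (auto elim: dvdE)
  have "poly t 1 = poly p 1 + poly q 1"
    using arg_cong [OF t, of "\<lambda>f. poly f 1"] odd_n odd_d by (simp add: poly_P_poly_one of_nat_bit)
  moreover have "[t * P_poly n = smult (poly t 1) (P_poly n)] (mod xn1 n)"
    by (rule mult_P_poly_cong_smult)
  moreover have "q = p * P_poly d + t * P_poly n"
    by (metis t bit_poly_add_cancel_left mult.commute)
  ultimately show ?thesis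
    by (metis cong_add cong_refl)
qed

lemma poly_a_one: "poly a 1 = 0"
  by (simp add: a_eq poly_monom)

lemma poly_b_one: "poly b 1 = 0"
  by (simp add: b_eq poly_monom)

lemma C2_iff_parities:
  assumes "w \<in> C1 n a b"
  shows "w \<in> C2 n a b \<longleftrightarrow> parities w = (0, 0)"
proof
  assume "w \<in> C2 n a b"
  then obtain c where "w = (rmod n (c * a), rmod n (c * b))"
    by (auto simp: C2_def)
  then show "parities w = (0, 0)"
    by (simp add: parities_def poly_rmod_one poly_a_one poly_b_one)
next
  assume "parities w = (0, 0)"
  then have p1: "poly (fst w) 1 = 0" and q1: "poly (snd w) 1 = 0"
    by (simp_all add: parities_def)
  obtain c where c: "fst w = a * c"
    using p1 by (auto simp: a_eq one_plus_X_dvd_iff [symmetric] elim: dvdE)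
  have p: "fst w \<in> Rn n" and q: "snd w \<in> Rn n"
    using assms by (simp_all add: C1_iff_cong)
  have "c \<in> Rn n"
  proof (cases "c = 0")
    case False
    then have "fst w \<noteq> 0" and "degree (fst w) = 1 + degree c"
      using a_nonzero by (simp_all add: c degree_mult_eq a_eq degree_add_eq_right degree_monom_eq)
    with p have "degree c < n"
      using n_pos by (simp add: Rn_iff_degree)
    then show ?thesis
      using n_pos by (simp add: Rn_iff_degree)
  qed (simp add: Rn_def rmod_def)
  moreover have "rmod n (c * a) = fst w"
    using p by (simp add: c Rn_def mult.commute)
  moreover have "rmod n (c * b) = snd w"
  proof -
    have "[snd w = fst w * P_poly d] (mod xn1 n)"
      using C1_snd_cong [of "fst w" "snd w"] assms p1 q1 by simp
    then have "rmod n (c * b) = rmod n (snd w)"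
      by (simp add: c b_eq_a_mult_P_poly rmod_eq_iff_cong cong_sym mult_ac)
    with q show ?thesis by (simp add: Rn_def)
  qed
  ultimately show "w \<in> C2 n a b"
    unfolding C2_def by (metis (mono_tags, lifting) mem_Collect_eq prod.collapse)
qed

lemma same_logical_iff_parities:
  "same_logical n a b w w' \<longleftrightarrow> w \<in> C1 n a b \<and> w' \<in> C1 n a b \<and> parities w = parities w'"
proof -
  have "vadd w w' \<in> C2 n a b \<longleftrightarrow> parities w = parities w'"
    if "w \<in> C1 n a b" and "w' \<in> C1 n a b"
    using that by (simp add: C2_iff_parities vadd_in_C1 parities_vadd prod_eq_iff)
  then show ?thesis by (auto simp: same_logical_def)
qed

lemma C1_weight_bound:
  assumes w: "(p, q) \<in> C1 n a b"
    and RS: "[R + P_poly d * S = P_poly n] (mod xn1 n)"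
    and odd: "poly p 1 + poly S 1 * (poly p 1 + poly q 1) = 1"
  shows "n \<le> pwt p * pwt R + pwt q * pwt S"
proof -
  define l where "l = poly p 1 + poly q 1"
  have "[p * R + q * S = p * R + (p * P_poly d + smult l (P_poly n)) * S] (mod xn1 n)"
    using C1_snd_cong [OF w] unfolding l_def by (intro cong_add cong_mult cong_refl)
  also have "p * R + (p * P_poly d + smult l (P_poly n)) * S
      = p * (R + P_poly d * S) + smult l (S * P_poly n)"
    by (simp add: algebra_simps)
  also have "[\<dots> = p * P_poly n + smult l (smult (poly S 1) (P_poly n))] (mod xn1 n)"
  proof (intro cong_add cong_mult cong_refl RS)
    show "[smult l (S * P_poly n) = smult l (smult (poly S 1) (P_poly n))] (mod xn1 n)"
      using cong_scalar_left [OF mult_P_poly_cong_smult, of "[:l:]" S n] by (simp add: mult.commute)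
  qed
  also have "[p * P_poly n + smult l (smult (poly S 1) (P_poly n))
      = smult (poly p 1) (P_poly n) + smult l (smult (poly S 1) (P_poly n))] (mod xn1 n)"
    by (intro cong_add cong_refl mult_P_poly_cong_smult)
  also have "smult (poly p 1) (P_poly n) + smult l (smult (poly S 1) (P_poly n)) = P_poly n"
    using odd by (simp add: l_def mult.commute flip: smult_add_left)
  finally have "rmod n (p * R) + rmod n (q * S) = P_poly n"
    using smult_P_poly_in_Rn [OF n_pos, of 1]
    by (simp add: Rn_def rmod_eq_iff_cong [symmetric] rmod_add)
  then have "n \<le> pwt (rmod n (p * R)) + pwt (rmod n (q * S))"
    using pwt_add_le by (metis pwt_P_poly)
  then show ?thesis
    using pwt_rmod_mult_le [OF n_pos] by (meson add_mono order_trans)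
qed

end

locale gb_square_code = gb_code +
  fixes h :: nat
  assumes d_eq: "d = 2 * h + 1" and n_eq: "n = 2 * h * h + 2 * h + 1"
begin

lemma d_mult_d: "d * d + 1 = 2 * n"
  by (simp add: d_eq n_eq algebra_simps)

lemma h_mult_d: "h * d + (h + 1) = n"
  by (simp add: d_eq n_eq algebra_simps)

lemma Suc_h_mult_d: "(h + 1) * d = n + h"
  by (simp add: d_eq n_eq algebra_simps)

lemma u_poly_eq: "u_poly d = subst_pow (P_poly h) d"
  by (simp add: u_poly_def P_poly_def subst_pow_sum subst_pow_monom d_eq)

lemma v_poly_eq: "v_poly n d = monom 1 (h * d) * P_poly (h + 1)"
proof -
  have "n - (d + 1) div 2 = h * d"
    using h_mult_d d_eq by simp
  then have "{n - (d + 1) div 2..<n} = {h * d..<h * d + (h + 1)}"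
    by (simp only: h_mult_d)
  then show ?thesis unfolding v_poly_def by (simp only: sum_monom_interval)
qed

lemma v_plus_P_poly_mult_u_cong: "[v_poly n d + P_poly d * u_poly d = P_poly n] (mod xn1 n)"
proof -
  have "v_poly n d + P_poly d * u_poly d = P_poly (h * d + (h + 1))"
    unfolding v_poly_eq u_poly_eq P_poly_mult_subst_pow_P_poly P_poly_add by (rule add.commute)
  then show ?thesis by (simp only: h_mult_d cong_refl)
qed

lemma P_poly_plus_P_poly_mult_subst_pow_cong:
  "[P_poly h + P_poly d * subst_pow (P_poly (h + 1)) d = P_poly n] (mod xn1 n)"
proof -
  have "P_poly h + P_poly d * subst_pow (P_poly (h + 1)) d
      = P_poly h + (P_poly n + monom 1 n * P_poly h)"
    unfolding P_poly_mult_subst_pow_P_poly Suc_h_mult_d P_poly_add [of n h] ..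
  also have "[\<dots> = P_poly h + (P_poly n + 1 * P_poly h)] (mod xn1 n)"
    using monom_cong_one [of n 1] by (intro cong_add cong_mult cong_refl) simp
  also have "P_poly h + (P_poly n + 1 * P_poly h) = P_poly n"
    by (simp add: add.left_commute)
  finally show ?thesis .
qed

lemma pwt_u_poly_le: "pwt (u_poly d) \<le> h"
  using pwt_subst_pow_le [of "P_poly h" d] by (simp add: u_poly_eq)

lemma pwt_v_poly_le: "pwt (v_poly n d) \<le> h + 1"
  using pwt_mult_le [of "monom 1 (h * d)" "P_poly (h + 1)"] by (simp add: v_poly_eq)

lemma d_le_if_n_le_weighted_sum:
  assumes "n \<le> x * (h + 1) + y * h"
  shows "d \<le> x + y"
proof (rule ccontr)
  assume "\<not> d \<le> x + y"
  then have "x + y \<le> 2 * h" using d_eq by linarith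
  then have "x * (h + 1) + y * h \<le> (2 * h) * (h + 1)"
    using mult_le_mono1 [of "x + y" "2 * h" "h + 1"] by (simp add: algebra_simps)
  with assms show False by (simp add: n_eq algebra_simps)
qed

lemma d_le_wt:
  assumes "w \<in> C1 n a b" and "parities w \<noteq> (0, 0)"
  shows "d \<le> wt w"
proof -
  obtain p q where w: "w = (p, q)" by (cases w)
  have "poly p 1 + of_nat h * (poly p 1 + poly q 1) = 1
      \<or> poly p 1 + of_nat (h + 1) * (poly p 1 + poly q 1) = 1"
    using assms(2)
    by (cases "even h"; cases "poly p 1"; cases "poly q 1") (simp_all add: w parities_def of_nat_bit)
  then show ?thesis
  proof
    assume "poly p 1 + of_nat h * (poly p 1 + poly q 1) = 1"
    then have "n \<le> pwt p * pwt (v_poly n d) + pwt q * pwt (u_poly d)"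
      using assms(1) v_plus_P_poly_mult_u_cong
      by (intro C1_weight_bound) (simp_all add: w u_poly_eq poly_subst_pow_one poly_P_poly_one)
    then have "n \<le> pwt p * (h + 1) + pwt q * h"
      using pwt_v_poly_le pwt_u_poly_le by (meson add_mono mult_le_mono2 order_trans)
    then have "d \<le> pwt p + pwt q" by (rule d_le_if_n_le_weighted_sum)
    then show ?thesis by (simp add: w wt_def)
  next
    assume "poly p 1 + of_nat (h + 1) * (poly p 1 + poly q 1) = 1"
    then have "n \<le> pwt p * pwt (P_poly h) + pwt q * pwt (subst_pow (P_poly (h + 1)) d)"
      using assms(1) P_poly_plus_P_poly_mult_subst_pow_cong
      by (intro C1_weight_bound) (simp_all add: w poly_subst_pow_one poly_P_poly_one)
    then have "n \<le> pwt p * h + pwt q * pwt (subst_pow (P_poly (h + 1)) d)"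
      by (simp only: pwt_P_poly)
    moreover have "pwt q * pwt (subst_pow (P_poly (h + 1)) d) \<le> pwt q * (h + 1)"
      using pwt_subst_pow_le [of "P_poly (h + 1)" d] by (intro mult_le_mono2) simp
    ultimately have "n \<le> pwt q * (h + 1) + pwt p * h"
      by linarith
    then have "d \<le> pwt q + pwt p" by (rule d_le_if_n_le_weighted_sum)
    then show ?thesis by (simp add: w wt_def)
  qed
qed

lemma Suc_d_le_wt:
  assumes "w \<in> C1 n a b" and "parities w = (1, 1)"
  shows "d + 1 \<le> wt w"
proof -
  have "d \<le> wt w" using d_le_wt assms by simp
  moreover have "even (wt w)"
    using of_nat_wt [of w] assms(2) by (simp add: of_nat_bit)
  ultimately show ?thesis
    using odd_d by (cases "wt w = d") auto
qed

lemma shift_min_weight: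
  assumes "w \<in> C1 n a b" and "parities w \<noteq> (0, 0)" and "wt w \<le> d"
  shows "shift n i w \<in> C1 n a b - C2 n a b \<and> same_logical n a b (shift n i w) w
    \<and> wt (shift n i w) = d \<and> min_weight n a b (shift n i w)"
proof -
  have s: "shift n i w \<in> C1 n a b" "parities (shift n i w) = parities w"
    using assms(1) by (simp_all add: shift_in_C1 parities_shift)
  have "wt (shift n i w) = d"
    using d_le_wt [OF s(1)] s(2) assms(2,3) wt_shift_le [OF n_pos, of i w] by simp
  moreover have "min_weight n a b (shift n i w)"
    using d_le_wt s(2) assms(2) \<open>wt (shift n i w) = d\<close>
    by (auto simp: min_weight_def same_logical_iff_parities)
  ultimately show ?thesis
    using s assms by (simp add: C2_iff_parities same_logical_iff_parities)
qed

lemma shift_min_weight_parities_1_1: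
  assumes "w \<in> C1 n a b" and "parities w = (1, 1)" and "wt w \<le> d + 1"
    and "w' \<in> C1 n a b" and "parities w' = (1, 1)"
  shows "same_logical n a b (shift n i w) w' \<and> wt (shift n i w) = d + 1
    \<and> min_weight n a b (shift n i w)"
proof -
  have s: "shift n i w \<in> C1 n a b" "parities (shift n i w) = (1, 1)"
    using assms(1,2) by (simp_all add: shift_in_C1 parities_shift)
  have "wt (shift n i w) = d + 1"
    using Suc_d_le_wt [OF s] assms(3) wt_shift_le [OF n_pos, of i w] by simp
  moreover have "min_weight n a b (shift n i w)"
    using Suc_d_le_wt s(2) \<open>wt (shift n i w) = d + 1\<close>
    by (auto simp: min_weight_def same_logical_iff_parities)
  ultimately show ?thesis
    using s assms(4,5) by (simp add: same_logical_iff_parities)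
qed

lemma u_v_in_C1: "(u_poly d, v_poly n d) \<in> C1 n a b"
proof -
  have "u_poly d \<in> Rn n"
    unfolding u_poly_def
  proof (rule sum_monom_in_Rn [OF n_pos])
    fix j assume "j \<in> {..<(d - 1) div 2}"
    then have "j * d \<le> h * d" using d_eq by (intro mult_le_mono1) simp
    then show "j * d < n" using h_mult_d by linarith
  qed simp
  moreover have "v_poly n d \<in> Rn n"
    unfolding v_poly_def by (rule sum_monom_in_Rn [OF n_pos]) auto
  moreover have "u_poly d * b + v_poly n d * a = xn1 n"
  proof -
    have "v_poly n d * a = monom 1 (h * d) * ((1 + monom 1 1) * P_poly (h + 1))"
      by (simp add: v_poly_eq a_eq mult_ac)
    also have "\<dots> = monom 1 (h * d) + monom 1 n"
      by (simp only: one_plus_X_mult_P_poly distrib_left mult_monom mult_1 mult_1_right h_mult_d)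
    finally show ?thesis
      by (simp add: u_poly_eq b_eq subst_pow_P_poly_mult_one_plus_monom xn1_def bit_poly_diff
          add.commute)
  qed
  ultimately show ?thesis by (simp add: C1_iff_cong cong_0_iff)
qed

lemma parities_u_v: "parities (u_poly d, v_poly n d) = (of_nat h, of_nat (h + 1))"
  by (simp add: parities_def u_poly_eq v_poly_eq poly_subst_pow_one poly_P_poly_one poly_monom)

lemma wt_u_v_le: "wt (u_poly d, v_poly n d) \<le> d"
  using pwt_u_poly_le pwt_v_poly_le d_eq by (simp add: wt_def)

lemma twist_in_C1:
  assumes "w \<in> C1 n a b"
  shows "twist n d w \<in> C1 n a b"
proof -
  let ?p = "subst_pow (fst w) d" and ?q = "subst_pow (snd w) d" and ?x = "monom 1 1 :: bit poly"
  have "[subst_pow (fst w * b + snd w * a) d = subst_pow 0 d] (mod xn1 n)"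
    using assms by (intro subst_pow_cong) (simp add: C1_iff_cong)
  then have substituted: "[?p * (1 + monom 1 (d * d)) + ?q * b = 0] (mod xn1 n)"
    by (simp add: a_eq b_eq subst_pow_add subst_pow_mult subst_pow_one subst_pow_monom subst_pow_0)
  have "?x * (1 + monom 1 (d * d)) = ?x + monom 1 (n * 2)"
    using d_mult_d by (simp add: distrib_left mult_monom mult.commute)
  also have "[\<dots> = ?x + 1] (mod xn1 n)"
    by (intro cong_add cong_refl monom_cong_one)
  finally have "[a = ?x * (1 + monom 1 (d * d))] (mod xn1 n)"
    by (simp add: a_eq add.commute cong_sym)
  then have "[(?x * ?q) * b + ?p * a
      = (?x * ?q) * b + ?p * (?x * (1 + monom 1 (d * d)))] (mod xn1 n)"
    by (intro cong_add cong_mult cong_refl)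
  also have "(?x * ?q) * b + ?p * (?x * (1 + monom 1 (d * d)))
      = ?x * (?p * (1 + monom 1 (d * d)) + ?q * b)"
    by (simp add: algebra_simps)
  also have "[\<dots> = ?x * 0] (mod xn1 n)"
    by (intro cong_mult cong_refl substituted)
  finally show ?thesis
    unfolding twist_def by (intro rmod_pair_in_C1) simp
qed

definition P_poly_inv :: "bit poly" where
  "P_poly_inv =
    rmod n (monom 1 1 * subst_pow (P_poly (h + 1)) d + monom 1 (h + 1) * subst_pow (P_poly h) d)"

lemma P_poly_inv_cong: "[P_poly_inv * P_poly d = 1] (mod xn1 n)"
proof -
  let ?x = "monom 1 1 :: bit poly" and ?J = "P_poly n"
  have "[P_poly_inv * P_poly d = (?x * subst_pow (P_poly (h + 1)) d
      + monom 1 (h + 1) * subst_pow (P_poly h) d) * P_poly d] (mod xn1 n)"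
    unfolding P_poly_inv_def by (intro cong_mult cong_refl rmod_cong)
  also have "(?x * subst_pow (P_poly (h + 1)) d + monom 1 (h + 1) * subst_pow (P_poly h) d) * P_poly d
      = ?x * (P_poly d * subst_pow (P_poly (h + 1)) d)
        + monom 1 (h + 1) * (P_poly d * subst_pow (P_poly h) d)"
    by (simp add: algebra_simps)
  also have "\<dots> = ?x * P_poly (n + h) + monom 1 (h + 1) * P_poly (h * d)"
    by (simp only: P_poly_mult_subst_pow_P_poly Suc_h_mult_d)
  finally have expanded:
    "[P_poly_inv * P_poly d = ?x * P_poly (n + h) + monom 1 (h + 1) * P_poly (h * d)] (mod xn1 n)" .
  have "?x * P_poly (n + h) = ?x * ?J + monom 1 (n + 1) * P_poly h"
    by (simp add: P_poly_add distrib_left mult_monom mult.assoc [symmetric])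
  also have "[\<dots> = ?J + ?x * P_poly h] (mod xn1 n)"
  proof (intro cong_add cong_mult cong_refl)
    show "[?x * ?J = ?J] (mod xn1 n)"
      using mult_P_poly_cong_smult [of ?x n] by (simp add: poly_monom)
    have "[monom 1 n * ?x = 1 * ?x] (mod xn1 n)"
      using monom_cong_one [of n 1] by (intro cong_mult cong_refl) simp
    then show "[monom 1 (n + 1) = ?x] (mod xn1 n)"
      by (simp add: mult_monom)
  qed
  finally have first: "[?x * P_poly (n + h) = ?J + ?x * P_poly h] (mod xn1 n)" .
  have "?J = P_poly (1 + h) + monom 1 (h + 1) * P_poly (h * d)"
    using P_poly_add [of "1 + h" "h * d"] h_mult_d by (simp add: add.commute)
  moreover have "P_poly (1 + h) = 1 + ?x * P_poly h"
    using P_poly_add [of 1 h] by (simp add: P_poly_def)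
  ultimately have second: "monom 1 (h + 1) * P_poly (h * d) = ?J + 1 + ?x * P_poly h"
    by (simp add: add.assoc)
  have "[?x * P_poly (n + h) + monom 1 (h + 1) * P_poly (h * d)
      = (?J + ?x * P_poly h) + (?J + 1 + ?x * P_poly h)] (mod xn1 n)"
    unfolding second by (intro cong_add first cong_refl)
  also have "(?J + ?x * P_poly h) + (?J + 1 + ?x * P_poly h) = 1"
    by (simp add: add.assoc add.left_commute)
  finally show ?thesis
    using expanded cong_trans by blast
qed

lemma P_poly_inv_in_Rn: "P_poly_inv \<in> Rn n"
  by (simp add: P_poly_inv_def rmod_in_Rn)

lemma rinv_P_poly: "rinv n (P_poly d) = P_poly_inv"
  using n_pos P_poly_inv_in_Rn P_poly_inv_cong by (rule rinv_eqI)

lemma P_poly_invertible: "\<exists>q \<in> Rn n. rmod n (q * P_poly d) = 1"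
  using P_poly_inv_in_Rn P_poly_inv_cong rmod_one [OF n_pos] by (metis rmod_eq_iff_cong)

lemma pwt_P_poly_inv_le: "pwt P_poly_inv \<le> d"
proof -
  have "pwt P_poly_inv \<le> pwt (monom 1 1 * subst_pow (P_poly (h + 1)) d)
      + pwt (monom 1 (h + 1) * subst_pow (P_poly h) d)"
    unfolding P_poly_inv_def using pwt_rmod_le [OF n_pos] pwt_add_le order_trans by blast
  also have "\<dots> \<le> (h + 1) + h"
    using pwt_mult_le [of "monom 1 1"] pwt_mult_le [of "monom 1 (h + 1)"] pwt_subst_pow_le
    by (metis add_mono mult_1 order_trans pwt_P_poly pwt_monom)
  finally show ?thesis using d_eq by simp
qed

lemma one_P_poly_in_C1: "(1, rmod n (P_poly d)) \<in> C1 n a b"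
proof -
  have "(rmod n 1, rmod n (P_poly d)) \<in> C1 n a b"
    by (rule rmod_pair_in_C1) (simp add: b_eq_a_mult_P_poly mult.commute)
  then show ?thesis by (simp add: rmod_one n_pos)
qed

lemma parities_one_P_poly: "parities (1, rmod n (P_poly d)) = (1, 1)"
  using odd_d by (simp add: parities_def poly_rmod_one poly_P_poly_one of_nat_bit)

lemma wt_one_P_poly_le: "wt (1, rmod n (P_poly d)) \<le> d + 1"
  using pwt_rmod_le [OF n_pos, of "P_poly d"] by (simp add: wt_def)

lemma P_poly_inv_one_in_C1: "(P_poly_inv, 1) \<in> C1 n a b"
proof -
  have "P_poly_inv * b + 1 * a = (P_poly_inv * P_poly d) * a + a"
    by (simp add: b_eq_a_mult_P_poly mult_ac)
  also have "[\<dots> = 1 * a + a] (mod xn1 n)"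
    by (intro cong_add cong_mult cong_refl P_poly_inv_cong)
  finally have "(rmod n P_poly_inv, rmod n 1) \<in> C1 n a b"
    by (intro rmod_pair_in_C1) simp
  then show ?thesis
    using P_poly_inv_in_Rn by (simp add: Rn_def rmod_one n_pos)
qed

lemma parities_P_poly_inv_one: "parities (P_poly_inv, 1) = (1, 1)"
  using poly_one_cong [OF P_poly_inv_cong] odd_d by (simp add: parities_def poly_P_poly_one of_nat_bit)

lemma wt_P_poly_inv_one_le: "wt (P_poly_inv, 1) \<le> d + 1"
  using pwt_P_poly_inv_le by (simp add: wt_def)

end

theorem theorem5:
  fixes d n :: nat and a b u v :: "bit poly" and w1 w2 z1 z2 :: "bit poly \<times> bit poly"
  assumes "d \<ge> 3" and "odd d" and "n = (d^2 + 1) div 2"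
    and "a = 1 + monom 1 1" and "b = 1 + monom 1 d"
    and "u = u_poly d" and "v = v_poly n d"
    and "w1 = (u, v)"
    and "w2 = (rmod n (monom 1 1 * subst_pow v d), rmod n (subst_pow u d))"
    and "z1 = (1, rmod n (P_poly d))"
    and "z2 = (rinv n (P_poly d), 1)"
  shows
    "(\<exists>q \<in> Rn n. rmod n (q * P_poly d) = 1)
     \<and> w1 \<in> C1 n a b - C2 n a b
     \<and> w2 \<in> C1 n a b - C2 n a b
     \<and> vadd w1 w2 \<notin> C2 n a b
     \<and> (\<forall>i. shift n i w1 \<in> C1 n a b - C2 n a b \<and> same_logical n a b (shift n i w1) w1
             \<and> shift n i w2 \<in> C1 n a b - C2 n a b \<and> same_logical n a b (shift n i w2) w2
             \<and> same_logical n a b (shift n i z1) (vadd w1 w2)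
             \<and> same_logical n a b (shift n i z2) (vadd w1 w2)
             \<and> wt (shift n i w1) = d \<and> wt (shift n i w2) = d
             \<and> wt (shift n i z1) = d + 1 \<and> wt (shift n i z2) = d + 1
             \<and> min_weight n a b (shift n i w1) \<and> min_weight n a b (shift n i w2)
             \<and> min_weight n a b (shift n i z1) \<and> min_weight n a b (shift n i z2))"
proof -
  define h where "h = d div 2"
  have d_eq: "d = 2 * h + 1"
    using assms(2) by (simp add: h_def)
  have n_eq: "n = 2 * h * h + 2 * h + 1"
    using assms(3) by (simp add: d_eq power2_eq_square algebra_simps)
  interpret gb_square_code n d a b h
    using assms(2,4,5) d_eq n_eq by unfold_locales simp_all
  have w1: "w1 \<in> C1 n a b" "parities w1 = (of_nat h, of_nat (h + 1))" "wt w1 \<le> d"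
    using u_v_in_C1 parities_u_v wt_u_v_le by (simp_all add: assms(6-8))
  have w2: "w2 \<in> C1 n a b" "parities w2 = (of_nat (h + 1), of_nat h)" "wt w2 \<le> d"
    using twist_in_C1 [OF w1(1)] parities_twist [of n d w1] wt_twist_le [OF n_pos, of d w1] w1
    by (simp_all add: assms(8,9) twist_def)
  have z1: "z1 \<in> C1 n a b" "parities z1 = (1, 1)" "wt z1 \<le> d + 1"
    using one_P_poly_in_C1 parities_one_P_poly wt_one_P_poly_le by (simp_all add: assms(10))
  have z2: "z2 \<in> C1 n a b" "parities z2 = (1, 1)" "wt z2 \<le> d + 1"
    using P_poly_inv_one_in_C1 parities_P_poly_inv_one wt_P_poly_inv_one_le
    by (simp_all add: assms(11) rinv_P_poly)
  have nontrivial: "parities w1 \<noteq> (0, 0)" "parities w2 \<noteq> (0, 0)"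
    using w1(2) w2(2) by (cases "even h"; simp add: of_nat_bit)+
  have sum: "vadd w1 w2 \<in> C1 n a b" "parities (vadd w1 w2) = (1, 1)"
    using vadd_in_C1 [OF w1(1) w2(1)] w1(2) w2(2)
    by (cases "even h"; simp add: parities_vadd of_nat_bit)+
  show ?thesis
    using P_poly_invertible w1(1) w2(1) nontrivial sum C2_iff_parities
      shift_min_weight [OF w1(1) nontrivial(1) w1(3)]
      shift_min_weight [OF w2(1) nontrivial(2) w2(3)]
      shift_min_weight_parities_1_1 [OF z1 sum] shift_min_weight_parities_1_1 [OF z2 sum]
    by auto
qed

end
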